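(* There is an absolute constant $C$ such that the following holds. Let $\alpha$ and $\beta$ be two discrete random variables defined on the same finite probability space. Then there exists a random variable $\gamma$ defined on the same probability space such that $H(\alpha\mid\beta,\gamma)=0$ and $H(\gamma)\le 2H(\alpha\mid\beta)+C$.
   Context: $H$ denotes Shannon entropy (logarithms base $2$) and $H(\cdot\mid\cdot)$ conditional Shannon entropy. The probability space is finite and every non-empty event has positive probability. In the paper the bound is written $H(\gamma)\le 2H(\alpha\mid\beta)+O(1)$, the $O(1)$ being a constant independent of $\alpha,\beta$. *)

theory Defs
  imports "HOL-Probability.Probability"
begin

text \<open>A finite probability space is modelled as a probability mass function p on nat
  with finite support; the sample space is set_pmf p, so every non-empty event
  (subset of the support) has positive probability.\<close>

definition shannon_entropy :: "nat pmf \<Rightarrow> (nat \<Rightarrow> 'a) \<Rightarrow> real" where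
  "shannon_entropy p X =
     - (\<Sum>x \<in> X ` set_pmf p. pmf (map_pmf X p) x * log 2 (pmf (map_pmf X p) x))"

definition cond_shannon_entropy :: "nat pmf \<Rightarrow> (nat \<Rightarrow> 'a) \<Rightarrow> (nat \<Rightarrow> 'b) \<Rightarrow> real" where
  "cond_shannon_entropy p X Y =
     (\<Sum>y \<in> Y ` set_pmf p. pmf (map_pmf Y p) y *
        shannon_entropy (cond_pmf p {\<omega>. Y \<omega> = y}) X)"

end

theory Submission imports Defs begin

text \<open>Given \<beta> = b, list the values of \<alpha> in order of decreasing conditional probability
  and let \<gamma> be the position of \<alpha> in this list. Then (\<beta>, \<gamma>) determines \<alpha>, and since
  the first \<gamma> values each have conditional probability at least P(\<alpha> | \<beta>), we get
  \<gamma> \<le> 1 / P(\<alpha> | \<beta>), i.e. E log \<gamma> \<le> H(\<alpha> | \<beta>). Finally, comparing the distribution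
  of \<gamma> with q(r) = 1 / (r (r + 1)) in Gibbs' inequality gives H(\<gamma>) \<le> 2 E log \<gamma> + 1.\<close>

definition prob_eq :: "nat pmf \<Rightarrow> (nat \<Rightarrow> 'a) \<Rightarrow> 'a \<Rightarrow> real" where
  "prob_eq p X x = sum (pmf p) {\<omega>\<in>set_pmf p. X \<omega> = x}"

lemma pmf_map_pmf_eq_prob_eq:
  assumes "finite (set_pmf p)"
  shows "pmf (map_pmf X p) x = prob_eq p X x"
proof -
  have "pmf (map_pmf X p) x = measure p (X -` {x} \<inter> set_pmf p)"
    by (simp add: pmf_map measure_Int_set_pmf)
  also have "\<dots> = sum (pmf p) (X -` {x} \<inter> set_pmf p)"
    using assms by (simp add: measure_measure_pmf_finite)
  also have "X -` {x} \<inter> set_pmf p = {\<omega>\<in>set_pmf p. X \<omega> = x}" by auto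
  finally show ?thesis by (simp add: prob_eq_def)
qed

lemma sum_prob_eq_image:
  assumes "finite (set_pmf p)"
  shows "(\<Sum>x\<in>X ` set_pmf p. prob_eq p X x * g x) = (\<Sum>\<omega>\<in>set_pmf p. pmf p \<omega> * g (X \<omega>))"
proof -
  have "(\<Sum>\<omega>\<in>set_pmf p. pmf p \<omega> * g (X \<omega>)) =
     (\<Sum>x\<in>X ` set_pmf p. \<Sum>\<omega>\<in>{\<omega>. \<omega> \<in> set_pmf p \<and> X \<omega> = x}. pmf p \<omega> * g (X \<omega>))"
    by (rule sum.image_gen[OF assms])
  also have "\<dots> = (\<Sum>x\<in>X ` set_pmf p. prob_eq p X x * g x)"
    unfolding prob_eq_def sum_distrib_right by (intro sum.cong refl) auto
  finally show ?thesis by simp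
qed

lemma sum_prob_eq_image_eq_1:
  assumes "finite (set_pmf p)"
  shows "(\<Sum>x\<in>X ` set_pmf p. prob_eq p X x) = 1"
  using sum_prob_eq_image[OF assms, of X "\<lambda>_. 1"] sum_pmf_eq_1[OF assms subset_refl] by simp

lemma prob_eq_pos:
  assumes "finite (set_pmf p)" "\<omega> \<in> set_pmf p"
  shows "prob_eq p X (X \<omega>) > 0"
proof -
  have "pmf p \<omega> \<le> prob_eq p X (X \<omega>)"
    unfolding prob_eq_def using assms by (intro member_le_sum) auto
  moreover have "pmf p \<omega> > 0" using assms by (simp add: pmf_positive)
  ultimately show ?thesis by linarith
qed

lemma shannon_entropy_eq_sum_set_pmf:
  assumes "finite (set_pmf p)"
  shows "shannon_entropy p X = (\<Sum>\<omega>\<in>set_pmf p. pmf p \<omega> * - log 2 (prob_eq p X (X \<omega>)))"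
  unfolding shannon_entropy_def pmf_map_pmf_eq_prob_eq[OF assms]
  using sum_prob_eq_image[OF assms, of X "\<lambda>x. - log 2 (prob_eq p X x)"]
  by (simp add: sum_negf)

lemma cond_shannon_entropy_eq_sum_set_pmf:
  assumes fin: "finite (set_pmf p)"
  shows "cond_shannon_entropy p X Y = (\<Sum>\<omega>\<in>set_pmf p. pmf p \<omega> *
           - log 2 (prob_eq p (\<lambda>\<omega>. (X \<omega>, Y \<omega>)) (X \<omega>, Y \<omega>) / prob_eq p Y (Y \<omega>)))"
    (is "_ = (\<Sum>\<omega>\<in>_. pmf p \<omega> * ?g \<omega>)")
proof -
  let ?S = "set_pmf p"
  let ?F = "\<lambda>y. {\<omega>\<in>?S. Y \<omega> = y}"
  have fibre: "shannon_entropy (cond_pmf p {\<omega>. Y \<omega> = y}) X =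
     (\<Sum>\<omega>\<in>?F y. pmf p \<omega> / prob_eq p Y y * ?g \<omega>)" if "y \<in> Y ` ?S" for y
  proof -
    let ?q = "cond_pmf p {\<omega>. Y \<omega> = y}"
    have ne: "?S \<inter> {\<omega>. Y \<omega> = y} \<noteq> {}" using that by auto
    have set_q: "set_pmf ?q = ?F y" using ne by (auto simp: set_cond_pmf)
    have "measure p {\<omega>. Y \<omega> = y} = prob_eq p Y y"
      using pmf_map_pmf_eq_prob_eq[OF fin, of Y y] by (simp add: pmf_map vimage_def)
    then have pmf_q: "pmf ?q \<omega> = pmf p \<omega> / prob_eq p Y y" if "Y \<omega> = y" for \<omega>
      using pmf_cond[OF ne] that by simp
    have prob_q: "prob_eq ?q X (X \<omega>) =
        prob_eq p (\<lambda>\<omega>. (X \<omega>, Y \<omega>)) (X \<omega>, Y \<omega>) / prob_eq p Y (Y \<omega>)" if "\<omega> \<in> ?F y" for \<omega>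
    proof -
      have "prob_eq ?q X (X \<omega>) = (\<Sum>\<omega>'\<in>{\<omega>'\<in>?S. Y \<omega>' = y \<and> X \<omega>' = X \<omega>}. pmf p \<omega>' / prob_eq p Y y)"
        unfolding prob_eq_def[of ?q] set_q by (intro sum.cong) (auto simp: pmf_q)
      also have "\<dots> = prob_eq p (\<lambda>\<omega>. (X \<omega>, Y \<omega>)) (X \<omega>, Y \<omega>) / prob_eq p Y (Y \<omega>)"
        unfolding prob_eq_def sum_divide_distrib[symmetric] using that
        by (intro arg_cong2[where f="(/)"] sum.cong) auto
      finally show ?thesis .
    qed
    have fin_q: "finite (set_pmf ?q)" using set_q fin by simp
    show ?thesis unfolding shannon_entropy_eq_sum_set_pmf[OF fin_q] set_q
      by (intro sum.cong refl) (simp add: pmf_q prob_q)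
  qed
  have "cond_shannon_entropy p X Y =
      (\<Sum>y\<in>Y ` ?S. prob_eq p Y y * (\<Sum>\<omega>\<in>?F y. pmf p \<omega> / prob_eq p Y y * ?g \<omega>))"
    unfolding cond_shannon_entropy_def pmf_map_pmf_eq_prob_eq[OF fin]
    by (intro sum.cong refl) (simp add: fibre)
  also have "\<dots> = (\<Sum>y\<in>Y ` ?S. \<Sum>\<omega>\<in>{\<omega>. \<omega> \<in> ?S \<and> Y \<omega> = y}. pmf p \<omega> * ?g \<omega>)"
  proof (intro sum.cong refl)
    fix y assume "y \<in> Y ` ?S"
    then have "prob_eq p Y y > 0" using prob_eq_pos[OF fin, of _ Y] by auto
    then show "prob_eq p Y y * (\<Sum>\<omega>\<in>?F y. pmf p \<omega> / prob_eq p Y y * ?g \<omega>) =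
        (\<Sum>\<omega>\<in>{\<omega>. \<omega> \<in> ?S \<and> Y \<omega> = y}. pmf p \<omega> * ?g \<omega>)"
      by (simp add: sum_distrib_left)
  qed
  also have "\<dots> = (\<Sum>\<omega>\<in>?S. pmf p \<omega> * ?g \<omega>)"
    by (rule sum.image_gen[OF fin, symmetric])
  finally show ?thesis .
qed

lemma cond_shannon_entropy_eq_0_if_determined:
  assumes fin: "finite (set_pmf p)"
    and det: "\<And>\<omega> \<omega>'. \<omega> \<in> set_pmf p \<Longrightarrow> \<omega>' \<in> set_pmf p \<Longrightarrow> Y \<omega> = Y \<omega>' \<Longrightarrow> X \<omega> = X \<omega>'"
  shows "cond_shannon_entropy p X Y = 0"
  unfolding cond_shannon_entropy_eq_sum_set_pmf[OF fin]
proof (intro sum.neutral ballI)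
  fix \<omega> assume \<omega>: "\<omega> \<in> set_pmf p"
  have "{\<omega>'\<in>set_pmf p. (X \<omega>', Y \<omega>') = (X \<omega>, Y \<omega>)} = {\<omega>'\<in>set_pmf p. Y \<omega>' = Y \<omega>}"
    using det[OF _ \<omega>] by auto
  then have "prob_eq p (\<lambda>\<omega>. (X \<omega>, Y \<omega>)) (X \<omega>, Y \<omega>) = prob_eq p Y (Y \<omega>)"
    unfolding prob_eq_def by simp
  with prob_eq_pos[OF fin \<omega>, of Y]
  show "pmf p \<omega> * - log 2 (prob_eq p (\<lambda>\<omega>. (X \<omega>, Y \<omega>)) (X \<omega>, Y \<omega>) / prob_eq p Y (Y \<omega>)) = 0"
    by simp
qed

lemma neg_mult_log_le:
  fixes P q :: real
  assumes "P > 0" "q > 0"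
  shows "- (P * log 2 P) \<le> P * - log 2 q + (q - P) / ln 2"
proof -
  have "log 2 q - log 2 P = ln (q / P) / ln 2"
    using assms by (simp add: log_def ln_div diff_divide_distrib)
  also have "\<dots> \<le> (q / P - 1) / ln 2"
    using assms by (intro divide_right_mono ln_le_minus_one) auto
  finally have "P * (log 2 q - log 2 P) \<le> P * ((q / P - 1) / ln 2)"
    using assms by (intro mult_left_mono) auto
  also have "\<dots> = (q - P) / ln 2" using assms by (simp add: field_simps)
  finally show ?thesis by (simp add: algebra_simps)
qed

lemma shannon_entropy_le_cross_entropy:
  assumes fin: "finite (set_pmf p)"
    and q_pos: "\<And>\<omega>. \<omega> \<in> set_pmf p \<Longrightarrow> q (X \<omega>) > 0"
    and q_sum: "(\<Sum>x\<in>X ` set_pmf p. q x) \<le> 1"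
  shows "shannon_entropy p X \<le> (\<Sum>\<omega>\<in>set_pmf p. pmf p \<omega> * - log 2 (q (X \<omega>)))"
proof -
  let ?R = "X ` set_pmf p"
  let ?P = "prob_eq p X"
  have "shannon_entropy p X = (\<Sum>x\<in>?R. - (?P x * log 2 (?P x)))"
    unfolding shannon_entropy_def pmf_map_pmf_eq_prob_eq[OF fin] by (simp add: sum_negf)
  also have "\<dots> \<le> (\<Sum>x\<in>?R. ?P x * - log 2 (q x) + (q x - ?P x) / ln 2)"
    using prob_eq_pos[OF fin] q_pos by (intro sum_mono neg_mult_log_le) auto
  also have "\<dots> = (\<Sum>x\<in>?R. ?P x * - log 2 (q x)) + ((\<Sum>x\<in>?R. q x) - (\<Sum>x\<in>?R. ?P x)) / ln 2"
    by (simp add: sum.distrib sum_divide_distrib[symmetric] sum_subtractf sum_negf)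
  also have "\<dots> \<le> (\<Sum>x\<in>?R. ?P x * - log 2 (q x))"
    using q_sum sum_prob_eq_image_eq_1[OF fin, of X] by (simp add: divide_nonpos_pos)
  also have "\<dots> = (\<Sum>\<omega>\<in>set_pmf p. pmf p \<omega> * - log 2 (q (X \<omega>)))"
    by (rule sum_prob_eq_image[OF fin])
  finally show ?thesis .
qed

lemma sum_inverse_consecutive_products:
  "(\<Sum>r=1..N. 1 / (real r * (real r + 1))) = 1 - 1 / (real N + 1)"
proof (induction N)
  case (Suc N)
  have step: "1 - 1 / x + 1 / (x * (x + 1)) = 1 - 1 / (x + 1)" if "x > 0" for x :: real
  proof -
    have "x + x * x > 0" using that by (simp add: add_pos_pos)
    with that show ?thesis by (simp add: field_simps)
  qed
  from Suc step[of "real N + 1"] show ?case by (simp add: add.commute add.left_commute)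
qed simp

lemma neg_log_inverse_consecutive_product_le:
  assumes "r \<ge> (1::nat)"
  shows "- log 2 (1 / (real r * (real r + 1))) \<le> 2 * log 2 (real r) + 1"
proof -
  have r: "real r > 0" using assms by auto
  have "- log 2 (1 / (real r * (real r + 1))) = log 2 (real r) + log 2 (real r + 1)"
    using r by (simp add: log_divide log_mult)
  also have "log 2 (real r + 1) \<le> log 2 (2 * real r)"
    using r assms by (subst log_le_cancel_iff) auto
  also have "log 2 (2 * real r) = 1 + log 2 (real r)" using r by (simp add: log_mult)
  finally show ?thesis by simp
qed

lemma shannon_entropy_le_log_moment:
  fixes X :: "nat \<Rightarrow> nat"
  assumes fin: "finite (set_pmf p)" and pos: "\<And>\<omega>. \<omega> \<in> set_pmf p \<Longrightarrow> X \<omega> \<ge> 1"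
  shows "shannon_entropy p X \<le> 2 * (\<Sum>\<omega>\<in>set_pmf p. pmf p \<omega> * log 2 (real (X \<omega>))) + 1"
proof -
  let ?R = "X ` set_pmf p"
  define q where "q r = 1 / (real r * (real r + 1))" for r :: nat
  have "(\<Sum>r\<in>?R. q r) \<le> (\<Sum>r=1..Max ?R. q r)"
    using fin pos Max_ge[of ?R] unfolding q_def by (intro sum_mono2) auto
  also have "\<dots> \<le> 1" unfolding q_def sum_inverse_consecutive_products by simp
  finally have "shannon_entropy p X \<le> (\<Sum>\<omega>\<in>set_pmf p. pmf p \<omega> * - log 2 (q (X \<omega>)))"
    using pos by (intro shannon_entropy_le_cross_entropy[OF fin]) (auto simp: q_def intro!: mult_pos_pos dest!: pos)
  also have "\<dots> \<le> (\<Sum>\<omega>\<in>set_pmf p. pmf p \<omega> * (2 * log 2 (real (X \<omega>)) + 1))"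
    unfolding q_def using pos
    by (intro sum_mono mult_left_mono neg_log_inverse_consecutive_product_le) auto
  also have "\<dots> = 2 * (\<Sum>\<omega>\<in>set_pmf p. pmf p \<omega> * log 2 (real (X \<omega>))) + 1"
    using sum_pmf_eq_1[OF fin subset_refl]
    by (simp add: sum.distrib sum_distrib_left algebra_simps)
  finally show ?thesis .
qed

text \<open>Position of a in T when T is sorted by decreasing f, ties broken by the order of
  the elements; the first position is 1.\<close>

definition rank :: "('a::linorder \<Rightarrow> real) \<Rightarrow> 'a set \<Rightarrow> 'a \<Rightarrow> nat" where
  "rank f T a = card {x\<in>T. f a < f x \<or> (f x = f a \<and> x \<le> a)}"

lemma rank_strict_mono:
  assumes "finite T" "b \<in> T" "a \<noteq> b" "f b < f a \<or> (f a = f b \<and> a \<le> b)"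
  shows "rank f T a < rank f T b"
  unfolding rank_def
proof (rule psubset_card_mono)
  show "finite {x\<in>T. f b < f x \<or> (f x = f b \<and> x \<le> b)}" using assms(1) by simp
  have "b \<notin> {x\<in>T. f a < f x \<or> (f x = f a \<and> x \<le> a)}" using assms(3,4) by auto
  then show "{x\<in>T. f a < f x \<or> (f x = f a \<and> x \<le> a)} \<subset> {x\<in>T. f b < f x \<or> (f x = f b \<and> x \<le> b)}"
    using assms(2,4) by auto
qed

lemma inj_on_rank:
  assumes "finite T"
  shows "inj_on (rank f T) T"
proof (rule inj_onI, rule ccontr)
  fix a b assume ab: "a \<in> T" "b \<in> T" "rank f T a = rank f T b" "a \<noteq> b"
  have "f b < f a \<or> (f a = f b \<and> a \<le> b) \<or> f a < f b \<or> (f b = f a \<and> b \<le> a)" by auto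
  then show False
    using rank_strict_mono[OF assms, of b a f] rank_strict_mono[OF assms, of a b f] ab by auto
qed

lemma rank_pos:
  assumes "finite T" "a \<in> T"
  shows "rank f T a \<ge> 1"
proof -
  have "a \<in> {x\<in>T. f a < f x \<or> (f x = f a \<and> x \<le> a)}" using assms(2) by simp
  with assms(1) have "card {x\<in>T. f a < f x \<or> (f x = f a \<and> x \<le> a)} > 0"
    by (auto simp: card_gt_0_iff)
  then show ?thesis by (simp add: rank_def)
qed

lemma rank_mult_le_sum:
  assumes "finite T" "a \<in> T" "\<And>x. x \<in> T \<Longrightarrow> f x \<ge> 0"
  shows "real (rank f T a) * f a \<le> sum f T"
proof -
  let ?D = "{x\<in>T. f a < f x \<or> (f x = f a \<and> x \<le> a)}"
  have "real (rank f T a) * f a = (\<Sum>x\<in>?D. f a)" by (simp add: rank_def)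
  also have "\<dots> \<le> sum f ?D" by (intro sum_mono) auto
  also have "\<dots> \<le> sum f T" using assms by (intro sum_mono2) auto
  finally show ?thesis .
qed

definition cond_rank :: "nat pmf \<Rightarrow> (nat \<Rightarrow> 'a::linorder) \<Rightarrow> (nat \<Rightarrow> 'b) \<Rightarrow> nat \<Rightarrow> nat" where
  "cond_rank p X Y \<omega> = rank (\<lambda>x. prob_eq p (\<lambda>\<omega>. (X \<omega>, Y \<omega>)) (x, Y \<omega>))
                          (X ` {\<omega>'\<in>set_pmf p. Y \<omega>' = Y \<omega>}) (X \<omega>)"

lemma cond_rank_determines:
  assumes "finite (set_pmf p)" "\<omega> \<in> set_pmf p" "\<omega>' \<in> set_pmf p"
    and "Y \<omega> = Y \<omega>'" "cond_rank p X Y \<omega> = cond_rank p X Y \<omega>'"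
  shows "X \<omega> = X \<omega>'"
proof -
  let ?f = "\<lambda>x. prob_eq p (\<lambda>\<omega>. (X \<omega>, Y \<omega>)) (x, Y \<omega>)"
  let ?T = "X ` {\<omega>''\<in>set_pmf p. Y \<omega>'' = Y \<omega>}"
  have "X \<omega> \<in> ?T" "X \<omega>' \<in> ?T" using assms(2-4) by auto
  moreover have "rank ?f ?T (X \<omega>) = rank ?f ?T (X \<omega>')"
    using assms(4,5) by (simp add: cond_rank_def)
  ultimately show ?thesis using inj_on_rank[of ?T ?f] assms(1) by (auto dest: inj_onD)
qed

lemma cond_rank_pos:
  assumes "finite (set_pmf p)" "\<omega> \<in> set_pmf p"
  shows "cond_rank p X Y \<omega> \<ge> 1"
  unfolding cond_rank_def using assms by (intro rank_pos) auto

text \<open>Each value ranked up to X \<omega> is jointly (with Y \<omega>) at least as likely as X \<omega>, and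
  together these values have probability at most P(Y = Y \<omega>).\<close>

lemma log_cond_rank_le:
  assumes fin: "finite (set_pmf p)" and \<omega>: "\<omega> \<in> set_pmf p"
  shows "log 2 (real (cond_rank p X Y \<omega>))
           \<le> - log 2 (prob_eq p (\<lambda>\<omega>. (X \<omega>, Y \<omega>)) (X \<omega>, Y \<omega>) / prob_eq p Y (Y \<omega>))"
proof -
  let ?S = "{\<omega>'\<in>set_pmf p. Y \<omega>' = Y \<omega>}"
  let ?f = "\<lambda>x. prob_eq p (\<lambda>\<omega>. (X \<omega>, Y \<omega>)) (x, Y \<omega>)"
  have "prob_eq p Y (Y \<omega>) = (\<Sum>x\<in>X ` ?S. sum (pmf p) {\<omega>'. \<omega>' \<in> ?S \<and> X \<omega>' = x})"
    unfolding prob_eq_def using fin by (intro sum.image_gen) simp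
  also have "\<dots> = sum ?f (X ` ?S)"
    unfolding prob_eq_def by (intro sum.cong refl arg_cong2[where f=sum]) auto
  finally have sum_f: "sum ?f (X ` ?S) = prob_eq p Y (Y \<omega>)" ..
  have "real (cond_rank p X Y \<omega>) * ?f (X \<omega>) \<le> prob_eq p Y (Y \<omega>)"
    unfolding cond_rank_def sum_f[symmetric] using fin \<omega>
    by (intro rank_mult_le_sum) (auto simp: prob_eq_def intro: sum_nonneg)
  moreover have "?f (X \<omega>) > 0" using prob_eq_pos[OF fin \<omega>, of "\<lambda>\<omega>. (X \<omega>, Y \<omega>)"] by simp
  moreover have "prob_eq p Y (Y \<omega>) > 0" using prob_eq_pos[OF fin \<omega>] .
  moreover have "real (cond_rank p X Y \<omega>) > 0" using cond_rank_pos[OF fin \<omega>, of X Y] by simp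
  ultimately have "log 2 (real (cond_rank p X Y \<omega>)) \<le> log 2 (prob_eq p Y (Y \<omega>) / ?f (X \<omega>))"
    by (subst log_le_cancel_iff) (auto simp: le_divide_eq)
  with \<open>?f (X \<omega>) > 0\<close> \<open>prob_eq p Y (Y \<omega>) > 0\<close> show ?thesis
    by (simp add: log_divide)
qed

theorem mainTheorem1:
  shows "\<exists>C::real. \<forall>(p::nat pmf) (\<alpha>::nat \<Rightarrow> nat) (\<beta>::nat \<Rightarrow> nat).
           finite (set_pmf p) \<longrightarrow>
           (\<exists>\<gamma>::nat \<Rightarrow> nat.
              cond_shannon_entropy p \<alpha> (\<lambda>\<omega>. (\<beta> \<omega>, \<gamma> \<omega>)) = 0 \<and>
              shannon_entropy p \<gamma> \<le> 2 * cond_shannon_entropy p \<alpha> \<beta> + C)"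
proof (intro exI[of _ 1] allI impI)
  fix p :: "nat pmf" and \<alpha> \<beta> :: "nat \<Rightarrow> nat"
  assume fin: "finite (set_pmf p)"
  let ?\<gamma> = "cond_rank p \<alpha> \<beta>"
  have "cond_shannon_entropy p \<alpha> (\<lambda>\<omega>. (\<beta> \<omega>, ?\<gamma> \<omega>)) = 0"
    using cond_rank_determines[OF fin]
    by (intro cond_shannon_entropy_eq_0_if_determined[OF fin]) auto
  moreover have "shannon_entropy p ?\<gamma> \<le> 2 * (\<Sum>\<omega>\<in>set_pmf p. pmf p \<omega> * log 2 (real (?\<gamma> \<omega>))) + 1"
    using cond_rank_pos[OF fin] by (intro shannon_entropy_le_log_moment[OF fin])
  moreover have "(\<Sum>\<omega>\<in>set_pmf p. pmf p \<omega> * log 2 (real (?\<gamma> \<omega>))) \<le> cond_shannon_entropy p \<alpha> \<beta>"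
    unfolding cond_shannon_entropy_eq_sum_set_pmf[OF fin]
    using log_cond_rank_le[OF fin] by (intro sum_mono mult_left_mono) auto
  ultimately have "cond_shannon_entropy p \<alpha> (\<lambda>\<omega>. (\<beta> \<omega>, ?\<gamma> \<omega>)) = 0 \<and>
      shannon_entropy p ?\<gamma> \<le> 2 * cond_shannon_entropy p \<alpha> \<beta> + 1"
    by linarith
  then show "\<exists>\<gamma>::nat \<Rightarrow> nat. cond_shannon_entropy p \<alpha> (\<lambda>\<omega>. (\<beta> \<omega>, \<gamma> \<omega>)) = 0 \<and>
      shannon_entropy p \<gamma> \<le> 2 * cond_shannon_entropy p \<alpha> \<beta> + 1"
    by blast
qed

end
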